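(* Let $d\ge 1$, $T\ge 1$, let $\mathcal{X}\subseteq\mathbb{R}^d$ be a non-empty closed convex set, and let $0<\mu\le L$. Let $f_1,\dots,f_T:\mathcal{X}\to[0,\infty)$ be differentiable with $\frac{\mu}{2}\|y-x\|^2\le f_t(y)-f_t(x)-\langle\nabla f_t(x),y-x\rangle\le\frac{L}{2}\|y-x\|^2$ for all $t$ and $x,y\in\mathcal{X}$. Let $x_1,\dots,x_T$ be the iterates of the OMGD algorithm with $K=\lceil\frac{L+\mu}{2\mu}\ln4\rceil$ from a starting point $x_0\in\mathcal{X}$, and let $C_{\mathcal{A}_o}=\sum_{t=1}^T\big(f_t(x_t)+\|x_t-x_{t-1}\|\big)$. Then for any $\alpha>0$, $$C_{\mathcal{A}_o}\le\sum_{t=1}^T f_t(x_t^\star)+\frac{1}{2\alpha}\sum_{t=1}^T\|\nabla f_t(x_t^\star)\|^2+(L+\alpha)\big(\|x_1-x_1^\star\|^2+2\mathcal{P}_{2,T}^\star\big)+3\|x_1-x_1^\star\|+3\mathcal{P}_T^\star.$$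
   Context: $x_t^\star=\arg\min_{x\in\mathcal{X}}f_t(x)$, $\mathcal{P}_T^\star=\sum_{t=2}^T\|x_t^\star-x_{t-1}^\star\|$, $\mathcal{P}_{2,T}^\star=\sum_{t=2}^T\|x_t^\star-x_{t-1}^\star\|^2$. OMGD with parameter $K$: $x_1=x_0$; for $t=2,\dots,T$, $z_t^{(0)}=x_{t-1}$, $z_t^{(k)}=\Pi_{\mathcal{X}}\big(z_t^{(k-1)}-\frac1L\nabla f_{t-1}(z_t^{(k-1)})\big)$ ($k=1,\dots,K$), $x_t=z_t^{(K)}$, where $\Pi_{\mathcal{X}}$ is Euclidean projection onto $\mathcal{X}$. *)

theory Defs
  imports "HOL-Analysis.Analysis"
begin

definition pgd_step :: "'a::euclidean_space set \<Rightarrow> real \<Rightarrow> ('a \<Rightarrow> 'a) \<Rightarrow> 'a \<Rightarrow> 'a" where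
  "pgd_step X L g z = closest_point X (z - (1 / L) *\<^sub>R g z)"

text \<open>OMGD iterates: omgd X L grad K x0 t = x_t.  x_0 = x_1 = x0 and for t \<ge> 2,
  x_t is obtained from x_(t-1) by K projected gradient steps on f_(t-1),
  where grad (t-1) is the gradient of f_(t-1).\<close>
fun omgd :: "'a::euclidean_space set \<Rightarrow> real \<Rightarrow> (nat \<Rightarrow> 'a \<Rightarrow> 'a) \<Rightarrow> nat \<Rightarrow> 'a \<Rightarrow> nat \<Rightarrow> 'a" where
  "omgd X L grad K x0 0 = x0"
| "omgd X L grad K x0 (Suc 0) = x0"
| "omgd X L grad K x0 (Suc (Suc n)) =
     (pgd_step X L (grad (Suc n)) ^^ K) (omgd X L grad K x0 (Suc n))"

end

theory Submission
  imports Defs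
begin

(* One projected gradient step on a mu-strongly convex, L-smooth function contracts the squared
   distance to its minimiser by (L - mu)/(L + mu), so K steps make x_t at least twice as close to
   x*_(t-1) as x_(t-1) was.  With e_t = |x_t - x*_t| the triangle inequality then gives
   e_t <= e_(t-1)/2 + |x*_t - x*_(t-1)|, and summing this recursion bounds both sum e_t^2 and the
   movement cost sum |x_t - x_(t-1)| <= 3/2 sum e_(t-1) by the path lengths of the minimisers.
   The hitting cost f_t(x_t) is bounded by L-smoothness at x*_t together with Young's inequality
   for the gradient term.  Only the two quadratic bounds on the f_t are used (first-order
   optimality at a minimiser already follows from the upper bound). *)

lemma minimizer_inner_gradient_nonneg:
  fixes f :: "'a::real_inner \<Rightarrow> real"
  assumes "convex X" "x \<in> X" "y \<in> X"
    and min: "\<And>z. z \<in> X \<Longrightarrow> f x \<le> f z"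
    and upper: "\<And>z. z \<in> X \<Longrightarrow> f z - f x - g \<bullet> (z - x) \<le> A * (norm (z - x))\<^sup>2"
  shows "0 \<le> g \<bullet> (y - x)"
proof -
  define C where "C = A * (norm (y - x))\<^sup>2"
  have "0 \<le> g \<bullet> (y - x) + s * C" if s: "0 < s" "s < 1" for s
  proof -
    define w where "w = (1 - s) *\<^sub>R x + s *\<^sub>R y"
    have w: "w \<in> X" unfolding w_def using assms(1-3) s by (intro convexD) auto
    have "0 \<le> f w - f x" using min[OF w] by simp
    also have "\<dots> \<le> g \<bullet> (w - x) + A * (norm (w - x))\<^sup>2" using upper[OF w] by simp
    also have "\<dots> = s * (g \<bullet> (y - x) + s * C)"
      using s by (simp add: w_def C_def algebra_simps power2_eq_square flip: scaleR_diff_right)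
    finally show ?thesis using s by (simp add: zero_le_mult_iff)
  qed
  then have "\<forall>\<^sub>F s in at_right 0. 0 \<le> g \<bullet> (y - x) + s * C"
    unfolding eventually_at_right_field by (intro exI[of _ 1]) auto
  moreover have "((\<lambda>s. g \<bullet> (y - x) + s * C) \<longlongrightarrow> g \<bullet> (y - x)) (at_right 0)"
    by (auto intro!: tendsto_eq_intros)
  ultimately show ?thesis by (intro tendsto_lowerbound) auto
qed

lemma inner_le_young:
  fixes g v :: "'a::real_inner"
  assumes "0 < \<alpha>"
  shows "g \<bullet> v \<le> 1 / (2 * \<alpha>) * (norm g)\<^sup>2 + \<alpha> / 2 * (norm v)\<^sup>2"
proof -
  have "0 \<le> (norm (g - \<alpha> *\<^sub>R v))\<^sup>2 / (2 * \<alpha>)" using assms by simp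
  also have "\<dots> = 1 / (2 * \<alpha>) * (norm g)\<^sup>2 + \<alpha> / 2 * (norm v)\<^sup>2 - g \<bullet> v"
    using assms unfolding power2_norm_eq_inner
    by (simp add: inner_diff_left inner_diff_right inner_commute field_simps)
  finally show ?thesis by simp
qed

lemma value_le_of_upper_quadratic_bound:
  fixes f :: "'a::real_inner \<Rightarrow> real"
  assumes "f y - f x - g \<bullet> (y - x) \<le> L / 2 * (norm (y - x))\<^sup>2" "0 < \<alpha>"
  shows "f y \<le> f x + 1 / (2 * \<alpha>) * (norm g)\<^sup>2 + (L + \<alpha>) / 2 * (norm (y - x))\<^sup>2"
proof -
  have "(L + \<alpha>) / 2 * (norm (y - x))\<^sup>2 = L / 2 * (norm (y - x))\<^sup>2 + \<alpha> / 2 * (norm (y - x))\<^sup>2"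
    by (simp add: field_simps)
  then show ?thesis
    using assms inner_le_young[OF assms(2), of g "y - x"] by linarith
qed

lemma sum_shift_pred: "(\<Sum>t=2..T. h (t - 1)) = (\<Sum>t=1..<T. h t)"
  for h :: "nat \<Rightarrow> 'a::comm_monoid_add"
  by (induction T) (auto simp: atLeastAtMostSuc_conv atLeastLessThanSuc add.commute)

lemma pgd_step_in: "closed X \<Longrightarrow> X \<noteq> {} \<Longrightarrow> pgd_step X L g z \<in> X"
  unfolding pgd_step_def by (rule closest_point_in_set)

lemma funpow_in: "(\<And>z. z \<in> X \<Longrightarrow> F z \<in> X) \<Longrightarrow> z \<in> X \<Longrightarrow> (F ^^ n) z \<in> X"
  by (induction n) auto

lemma omgd_in:
  assumes "closed X" "X \<noteq> {}" "x0 \<in> X"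
  shows "omgd X L grad K x0 t \<in> X"
  using assms by (induction X L grad K x0 t rule: omgd.induct) (auto intro: funpow_in pgd_step_in)

lemma funpow_sq_dist_le:
  fixes F :: "'a::real_normed_vector \<Rightarrow> 'a"
  assumes into: "\<And>z. z \<in> X \<Longrightarrow> F z \<in> X"
    and contr: "\<And>z. z \<in> X \<Longrightarrow> (norm (F z - c))\<^sup>2 \<le> r * (norm (z - c))\<^sup>2"
    and r: "0 \<le> r" and z: "z \<in> X"
  shows "(norm ((F ^^ n) z - c))\<^sup>2 \<le> r ^ n * (norm (z - c))\<^sup>2"
proof (induction n)
  case (Suc n)
  have "(norm (F ((F ^^ n) z) - c))\<^sup>2 \<le> r * (norm ((F ^^ n) z - c))\<^sup>2"
    by (rule contr[OF funpow_in[OF into z]])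
  also have "\<dots> \<le> r * (r ^ n * (norm (z - c))\<^sup>2)"
    using Suc.IH r by (rule mult_left_mono)
  finally show ?case by (simp add: mult.assoc)
qed simp

context
  fixes X :: "'a::euclidean_space set" and f :: "'a \<Rightarrow> real" and g :: "'a \<Rightarrow> 'a"
    and \<mu> L :: real and xs :: 'a
  assumes X: "convex X" "closed X" "X \<noteq> {}" and mu: "0 < \<mu>" "\<mu> \<le> L"
    and strong: "\<And>x y. x \<in> X \<Longrightarrow> y \<in> X \<Longrightarrow>
                  \<mu> / 2 * (norm (y - x))\<^sup>2 \<le> f y - f x - g x \<bullet> (y - x)"
    and smooth: "\<And>x y. x \<in> X \<Longrightarrow> y \<in> X \<Longrightarrow>
                  f y - f x - g x \<bullet> (y - x) \<le> L / 2 * (norm (y - x))\<^sup>2"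
    and xs: "xs \<in> X" and min: "\<And>y. y \<in> X \<Longrightarrow> f xs \<le> f y"
begin

lemma pgd_step_sq_dist_le:
  assumes z: "z \<in> X"
  shows "(norm (pgd_step X L g z - xs))\<^sup>2 \<le> (L - \<mu>) / (L + \<mu>) * (norm (z - xs))\<^sup>2"
proof -
  define p where "p = pgd_step X L g z"
  define a where "a = z - p"
  define b where "b = p - xs"
  have p: "p \<in> X" unfolding p_def using X(2,3) by (rule pgd_step_in)
  have "(z - (1 / L) *\<^sub>R g z - p) \<bullet> (xs - p) \<le> 0"
    unfolding p_def pgd_step_def using X(1,2) xs by (rule closest_point_dot)
  moreover have "z - (1 / L) *\<^sub>R g z - p = a - (1 / L) *\<^sub>R g z" "xs - p = - b"
    by (simp_all add: a_def b_def)
  ultimately have "(1 / L) * (g z \<bullet> b) \<le> a \<bullet> b"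
    by (simp add: inner_diff_left)
  then have proj: "g z \<bullet> b \<le> L * (a \<bullet> b)"
    using mu by (simp add: field_simps)
  have opt: "0 \<le> g xs \<bullet> b"
    unfolding b_def by (rule minimizer_inner_gradient_nonneg[OF X(1) xs p min smooth[OF xs]])
  have ab: "(norm (a + b))\<^sup>2 = (norm a)\<^sup>2 + 2 * (a \<bullet> b) + (norm b)\<^sup>2"
    by (simp add: power2_norm_eq_inner inner_add_left inner_add_right inner_commute)
  have "f p - f z + g z \<bullet> a \<le> L / 2 * (norm a)\<^sup>2"
    using smooth[OF z p] by (simp add: a_def inner_diff_right norm_minus_commute)
  moreover have "\<mu> / 2 * (norm (a + b))\<^sup>2 \<le> f xs - f z + g z \<bullet> (a + b)"
    using strong[OF z xs] by (simp add: a_def b_def inner_diff_right norm_minus_commute)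
  moreover have "\<mu> / 2 * (norm b)\<^sup>2 \<le> f p - f xs - g xs \<bullet> b"
    using strong[OF xs p] by (simp add: b_def)
  \<comment> \<open>Adding the three quadratic bounds cancels the function values; the gradient terms
    left over are controlled by \<open>proj\<close> and \<open>opt\<close>.\<close>
  ultimately have "(L + \<mu>) * (norm b)\<^sup>2 \<le> (L - \<mu>) * (norm (a + b))\<^sup>2"
    using proj opt ab by (simp add: inner_add_right algebra_simps)
  then show ?thesis
    using mu by (simp add: a_def b_def p_def pos_le_divide_eq mult.commute)
qed

lemma funpow_pgd_step_dist_le_half:
  assumes z: "z \<in> X"
    and rate: "((L - \<mu>) / (L + \<mu>)) ^ K \<le> 1 / 4"
  shows "norm ((pgd_step X L g ^^ K) z - xs) \<le> norm (z - xs) / 2"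
proof -
  have "(norm ((pgd_step X L g ^^ K) z - xs))\<^sup>2 \<le> ((L - \<mu>) / (L + \<mu>)) ^ K * (norm (z - xs))\<^sup>2"
    using pgd_step_in[OF X(2,3)] pgd_step_sq_dist_le mu z
    by (intro funpow_sq_dist_le) auto
  also have "\<dots> \<le> 1 / 4 * (norm (z - xs))\<^sup>2"
    using rate by (rule mult_right_mono) simp
  also have "\<dots> = (norm (z - xs) / 2)\<^sup>2"
    by (simp add: power_divide)
  finally show ?thesis
    by (rule power2_le_imp_le) simp
qed

end

lemma one_minus_power_le_inverse:
  fixes r c :: real
  assumes "0 < r" "r \<le> 1" "0 < c" "ln c \<le> r * n"
  shows "(1 - r) ^ n \<le> 1 / c"
proof -
  have "(1 - r) ^ n \<le> exp (- r) ^ n"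
    using assms exp_ge_add_one_self[of "- r"] by (intro power_mono) auto
  also have "\<dots> = exp (- (r * n))"
    by (simp add: mult.commute flip: exp_of_nat_mult)
  also have "\<dots> \<le> exp (- ln c)"
    using assms by simp
  also have "\<dots> = 1 / c"
    using assms by (simp add: exp_minus inverse_eq_divide)
  finally show ?thesis .
qed

lemma contraction_factor_power_le_quarter:
  fixes \<mu> L :: real
  assumes "0 < \<mu>" "\<mu> \<le> L"
  shows "((L - \<mu>) / (L + \<mu>)) ^ nat \<lceil>(L + \<mu>) / (2 * \<mu>) * ln 4\<rceil> \<le> 1 / 4"
proof -
  define r where "r = 2 * \<mu> / (L + \<mu>)"
  have r: "0 < r" "r \<le> 1" "(L - \<mu>) / (L + \<mu>) = 1 - r"
    using assms by (auto simp: r_def field_simps)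
  have "ln 4 = r * ((L + \<mu>) / (2 * \<mu>) * ln 4)"
    using assms by (simp add: r_def)
  also have "\<dots> \<le> r * nat \<lceil>(L + \<mu>) / (2 * \<mu>) * ln 4\<rceil>"
    using r(1) by (intro mult_left_mono) (auto intro: real_nat_ceiling_ge)
  finally have "(1 - r) ^ nat \<lceil>(L + \<mu>) / (2 * \<mu>) * ln 4\<rceil> \<le> 1 / 4"
    using r by (intro one_minus_power_le_inverse) auto
  then show ?thesis
    using r(3) by simp
qed

lemma sum_le_of_linear_recursion:
  fixes a b :: "nat \<Rightarrow> real"
  assumes rec: "\<And>t. 2 \<le> t \<Longrightarrow> t \<le> T \<Longrightarrow> a t \<le> c * a (t - 1) + b t"
    and c: "0 \<le> c" and nonneg: "\<And>t. 0 \<le> a t"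
  shows "(1 - c) * (\<Sum>t=1..T. a t) \<le> a 1 + (\<Sum>t=2..T. b t)"
proof (cases "T = 0")
  case True
  then show ?thesis using nonneg by simp
next
  case False
  have "(\<Sum>t=2..T. a t) \<le> (\<Sum>t=2..T. c * a (t - 1) + b t)"
    using rec by (intro sum_mono) auto
  also have "\<dots> = c * (\<Sum>t=1..<T. a t) + (\<Sum>t=2..T. b t)"
    by (simp only: sum.distrib sum_shift_pred flip: sum_distrib_left)
  also have "\<dots> \<le> c * (\<Sum>t=1..T. a t) + (\<Sum>t=2..T. b t)"
    using c nonneg by (auto intro!: mult_left_mono sum_mono2)
  finally show ?thesis
    using False by (simp add: sum.atLeast_Suc_atMost numeral_2_eq_2 algebra_simps)
qed

context
  fixes x y :: "nat \<Rightarrow> 'a::real_normed_vector" and T :: nat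
  assumes halving: "\<And>t. 2 \<le> t \<Longrightarrow> t \<le> T \<Longrightarrow>
      norm (x t - y (t - 1)) \<le> norm (x (t - 1) - y (t - 1)) / 2"
begin

lemma tracking_error_le:
  assumes "2 \<le> t" "t \<le> T"
  shows "norm (x t - y t) \<le> 1 / 2 * norm (x (t - 1) - y (t - 1)) + norm (y t - y (t - 1))"
  using halving[OF assms] norm_triangle_ineq4[of "x t - y (t - 1)" "y t - y (t - 1)"] by simp

lemma sum_tracking_error_le:
  "(\<Sum>t=1..T. norm (x t - y t)) \<le> 2 * norm (x 1 - y 1) + 2 * (\<Sum>t=2..T. norm (y t - y (t - 1)))"
proof -
  have "(1 - 1 / 2) * (\<Sum>t=1..T. norm (x t - y t)) \<le> norm (x 1 - y 1) + (\<Sum>t=2..T. norm (y t - y (t - 1)))"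
    by (rule sum_le_of_linear_recursion) (use tracking_error_le in auto)
  then show ?thesis
    by simp
qed

lemma sum_sq_tracking_error_le:
  "(\<Sum>t=1..T. (norm (x t - y t))\<^sup>2)
     \<le> 2 * ((norm (x 1 - y 1))\<^sup>2 + 2 * (\<Sum>t=2..T. (norm (y t - y (t - 1)))\<^sup>2))"
proof -
  have "(norm (x t - y t))\<^sup>2 \<le> 1 / 2 * (norm (x (t - 1) - y (t - 1)))\<^sup>2 + 2 * (norm (y t - y (t - 1)))\<^sup>2"
    if "2 \<le> t" "t \<le> T" for t
  proof -
    have "(norm (x t - y t))\<^sup>2 \<le> (1 / 2 * norm (x (t - 1) - y (t - 1)) + norm (y t - y (t - 1)))\<^sup>2"
      using tracking_error_le[OF that] by (intro power_mono) auto
    also have "\<dots> \<le> 1 / 2 * (norm (x (t - 1) - y (t - 1)))\<^sup>2 + 2 * (norm (y t - y (t - 1)))\<^sup>2"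
      using sum_squares_ge_zero[of "1 / 2 * norm (x (t - 1) - y (t - 1)) - norm (y t - y (t - 1))" 0]
      by (simp add: power2_eq_square algebra_simps)
    finally show ?thesis .
  qed
  then have "(1 - 1 / 2) * (\<Sum>t=1..T. (norm (x t - y t))\<^sup>2)
      \<le> (norm (x 1 - y 1))\<^sup>2 + (\<Sum>t=2..T. 2 * (norm (y t - y (t - 1)))\<^sup>2)"
    by (intro sum_le_of_linear_recursion) auto
  moreover have "(\<Sum>t=2..T. 2 * (norm (y t - y (t - 1)))\<^sup>2) = 2 * (\<Sum>t=2..T. (norm (y t - y (t - 1)))\<^sup>2)"
    by (simp add: sum_distrib_left)
  ultimately show ?thesis
    by simp
qed

lemma tracking_path_length_le:
  assumes "x 1 = x 0"
  shows "(\<Sum>t=1..T. norm (x t - x (t - 1))) \<le> 3 * norm (x 1 - y 1) + 3 * (\<Sum>t=2..T. norm (y t - y (t - 1)))"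
proof -
  have "(\<Sum>t=1..T. norm (x t - x (t - 1))) = (\<Sum>t=2..T. norm (x t - x (t - 1)))"
    using assms by (cases T) (simp_all add: sum.atLeast_Suc_atMost numeral_2_eq_2)
  also have "\<dots> \<le> (\<Sum>t=2..T. 3 / 2 * norm (x (t - 1) - y (t - 1)))"
  proof (rule sum_mono)
    fix t assume "t \<in> {2..T}"
    then show "norm (x t - x (t - 1)) \<le> 3 / 2 * norm (x (t - 1) - y (t - 1))"
      using halving norm_triangle_ineq4[of "x t - y (t - 1)" "x (t - 1) - y (t - 1)"] by force
  qed
  also have "\<dots> = 3 / 2 * (\<Sum>t=1..<T. norm (x t - y t))"
    by (simp only: sum_shift_pred[of "\<lambda>t. norm (x t - y t)"] flip: sum_distrib_left)
  also have "\<dots> \<le> 3 / 2 * (\<Sum>t=1..T. norm (x t - y t))"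
    by (auto intro!: sum_mono2)
  finally show ?thesis
    using sum_tracking_error_le by linarith
qed

end

theorem lemma13:
  fixes X :: "'a::euclidean_space set"
    and f :: "nat \<Rightarrow> 'a \<Rightarrow> real"
    and grad :: "nat \<Rightarrow> 'a \<Rightarrow> 'a"
    and xs :: "nat \<Rightarrow> 'a"
    and x0 :: 'a
    and T :: nat
    and \<mu> L \<alpha> :: real
  assumes T: "T \<ge> 1"
    and X: "X \<noteq> {}" "closed X" "convex X"
    and mu: "0 < \<mu>" "\<mu> \<le> L"
    and nonneg: "\<And>t x. t \<in> {1..T} \<Longrightarrow> x \<in> X \<Longrightarrow> f t x \<ge> 0"
    and deriv: "\<And>t x. t \<in> {1..T} \<Longrightarrow> x \<in> X \<Longrightarrow>
                  (f t has_derivative (\<lambda>h. grad t x \<bullet> h)) (at x within X)"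
    and strong: "\<And>t x y. t \<in> {1..T} \<Longrightarrow> x \<in> X \<Longrightarrow> y \<in> X \<Longrightarrow>
                  \<mu> / 2 * (norm (y - x))\<^sup>2 \<le> f t y - f t x - grad t x \<bullet> (y - x)"
    and smooth: "\<And>t x y. t \<in> {1..T} \<Longrightarrow> x \<in> X \<Longrightarrow> y \<in> X \<Longrightarrow>
                  f t y - f t x - grad t x \<bullet> (y - x) \<le> L / 2 * (norm (y - x))\<^sup>2"
    and xs: "\<And>t. t \<in> {1..T} \<Longrightarrow> xs t \<in> X \<and> (\<forall>y\<in>X. f t (xs t) \<le> f t y)"
    and x0: "x0 \<in> X"
    and alpha: "\<alpha> > 0"
  shows "(let K = nat \<lceil>(L + \<mu>) / (2 * \<mu>) * ln 4\<rceil>;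
              x = omgd X L grad K x0;
              P = (\<Sum>t=2..T. norm (xs t - xs (t - 1)));
              P2 = (\<Sum>t=2..T. (norm (xs t - xs (t - 1)))\<^sup>2)
          in (\<Sum>t=1..T. f t (x t) + norm (x t - x (t - 1)))
             \<le> (\<Sum>t=1..T. f t (xs t))
               + 1 / (2 * \<alpha>) * (\<Sum>t=1..T. (norm (grad t (xs t)))\<^sup>2)
               + (L + \<alpha>) * ((norm (x 1 - xs 1))\<^sup>2 + 2 * P2)
               + 3 * norm (x 1 - xs 1) + 3 * P)"
proof -
  define K where "K = nat \<lceil>(L + \<mu>) / (2 * \<mu>) * ln 4\<rceil>"
  define x where "x = omgd X L grad K x0"
  define P2 where "P2 = (\<Sum>t=2..T. (norm (xs t - xs (t - 1)))\<^sup>2)"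
  have x_in: "x t \<in> X" for t
    unfolding x_def using X(2,1) x0 by (rule omgd_in)
  have halving: "norm (x t - xs (t - 1)) \<le> norm (x (t - 1) - xs (t - 1)) / 2"
    if "2 \<le> t" "t \<le> T" for t
  proof -
    obtain n where t: "t = Suc (Suc n)"
      using \<open>2 \<le> t\<close> by (metis add_2_eq_Suc le_Suc_ex)
    then have n: "Suc n \<in> {1..T}"
      using \<open>t \<le> T\<close> by simp
    have "x t = (pgd_step X L (grad (Suc n)) ^^ K) (x (Suc n))"
      by (simp add: t x_def)
    then show ?thesis
      using funpow_pgd_step_dist_le_half[OF X(3,2,1) mu strong[OF n] smooth[OF n] _ _ x_in]
        xs[OF n] contraction_factor_power_le_quarter[OF mu] t by (simp add: K_def)
  qed
  have "(\<Sum>t=1..T. f t (x t)) \<le> (\<Sum>t=1..T. f t (xs t)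
      + 1 / (2 * \<alpha>) * (norm (grad t (xs t)))\<^sup>2 + (L + \<alpha>) / 2 * (norm (x t - xs t))\<^sup>2)"
    using smooth x_in xs alpha by (intro sum_mono value_le_of_upper_quadratic_bound) auto
  moreover have "(L + \<alpha>) / 2 * (\<Sum>t=1..T. (norm (x t - xs t))\<^sup>2)
      \<le> (L + \<alpha>) * ((norm (x 1 - xs 1))\<^sup>2 + 2 * P2)"
  proof -
    have "(\<Sum>t=1..T. (norm (x t - xs t))\<^sup>2) \<le> 2 * ((norm (x 1 - xs 1))\<^sup>2 + 2 * P2)"
      unfolding P2_def by (rule sum_sq_tracking_error_le) (rule halving)
    then have "(L + \<alpha>) / 2 * (\<Sum>t=1..T. (norm (x t - xs t))\<^sup>2)
        \<le> (L + \<alpha>) / 2 * (2 * ((norm (x 1 - xs 1))\<^sup>2 + 2 * P2))"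
      using mu alpha by (intro mult_left_mono) auto
    also have "\<dots> = (L + \<alpha>) * ((norm (x 1 - xs 1))\<^sup>2 + 2 * P2)"
      by simp
    finally show ?thesis .
  qed
  moreover have "(\<Sum>t=1..T. norm (x t - x (t - 1)))
      \<le> 3 * norm (x 1 - xs 1) + 3 * (\<Sum>t=2..T. norm (xs t - xs (t - 1)))"
    by (rule tracking_path_length_le, rule halving) (simp_all add: x_def numeral_eq_Suc)
  ultimately show ?thesis
    unfolding Let_def K_def[symmetric] x_def[symmetric] P2_def[symmetric]
    by (simp add: sum.distrib sum_distrib_left)
qed

end
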